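(* For every $T$, every sequence of outcomes $\mathbf x\in\{0,1\}^T$, every sequence of forecasts $\mathbf p\in[0,1]^T$, and every agent with a finite action set $\mathcal A$ and utility $u:\mathcal A\times\{0,1\}\to[-1,1]$, we have $\mathrm{AgentReg}_u(\mathbf p,\mathbf x)\le 4\,\mathrm{Cal}(\mathbf p,\mathbf x)$. In particular, if $\mathrm{Cal}(\mathbf p,\mathbf x)=o(T)$ then $\mathrm{AgentReg}_u(\mathbf p,\mathbf x)=o(T)$ for every such agent.
   Context: For $\mathbf x=(x_1,\dots,x_T)\in\{0,1\}^T$ and $\mathbf p=(p_1,\dots,p_T)\in[0,1]^T$, let $\beta=\frac1T\sum_t x_t$. For $p\in[0,1]$ let $n_p=|\{t:p_t=p\}|$ and $m_p=|\{t:p_t=p,\ x_t=1\}|$; the calibration error is $\mathrm{Cal}(\mathbf p,\mathbf x)=\sum_{p} |p\,n_p-m_p|$, the sum over the finitely many $p$ with $n_p>0$. An agent responds to forecast $p$ with an action $a(p)\in\arg\max_{a\in\mathcal A}\mathbb E_{x\sim\mathrm{Ber}(p)}[u(a,x)]$ (fixed tie-breaking), and $\mathrm{AgentReg}_u(\mathbf p,\mathbf x)=\sum_{t=1}^T u(a(\beta),x_t)-\sum_{t=1}^T u(a(p_t),x_t)$. *)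

theory Defs
  imports Complex_Main
begin

text \<open>Outcomes x t \<in> {0,1} and forecasts p t \<in> [0,1] for t < T (time steps indexed 0..T-1).\<close>

definition base_rate :: "nat \<Rightarrow> (nat \<Rightarrow> real) \<Rightarrow> real" where
  "base_rate T x = (\<Sum>t<T. x t) / real T"

definition cal_err :: "nat \<Rightarrow> (nat \<Rightarrow> real) \<Rightarrow> (nat \<Rightarrow> real) \<Rightarrow> real" where
  "cal_err T p x = (\<Sum>q \<in> p ` {..<T}.
      \<bar>q * real (card {t. t < T \<and> p t = q}) - real (card {t. t < T \<and> p t = q \<and> x t = 1})\<bar>)"

definition exp_util :: "('a \<Rightarrow> real \<Rightarrow> real) \<Rightarrow> 'a \<Rightarrow> real \<Rightarrow> real" where
  "exp_util u a q = (1 - q) * u a 0 + q * u a 1"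

definition best_response :: "'a set \<Rightarrow> ('a \<Rightarrow> real \<Rightarrow> real) \<Rightarrow> (real \<Rightarrow> 'a) \<Rightarrow> bool" where
  "best_response A u resp \<longleftrightarrow>
     (\<forall>q\<in>{0..1}. resp q \<in> A \<and> (\<forall>b\<in>A. exp_util u b q \<le> exp_util u (resp q) q))"

definition agent_reg :: "('a \<Rightarrow> real \<Rightarrow> real) \<Rightarrow> (real \<Rightarrow> 'a) \<Rightarrow> nat \<Rightarrow> (nat \<Rightarrow> real) \<Rightarrow> (nat \<Rightarrow> real) \<Rightarrow> real" where
  "agent_reg u resp T p x =
     (\<Sum>t<T. u (resp (base_rate T x)) (x t)) - (\<Sum>t<T. u (resp (p t)) (x t))"

end

theory Submission
  imports Defs
begin

text \<open>Group the rounds by forecast. On the level set of a forecast q with n rounds, m of them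
  with outcome 1, replacing the best response to q by the best response to the base rate changes the
  realised utility by n times the expected-utility difference at q, which is \<open>\<le> 0\<close>, plus
  \<open>(m - q n)\<close> times a difference of utility increments, which is at most 4 in absolute value.
  Summing the level-set bounds \<open>4 \<bar>q n - m\<bar>\<close> gives \<open>4 Cal\<close>.\<close>

lemma sum_binary_outcomes:
  fixes x :: "'b \<Rightarrow> real" and f :: "real \<Rightarrow> real"
  assumes "finite S" and "\<forall>t\<in>S. x t \<in> {0, 1}"
  shows "(\<Sum>t\<in>S. f (x t)) = real (card S) * f 0 + (f 1 - f 0) * real (card {t\<in>S. x t = 1})"
proof -
  have "(\<Sum>t\<in>S. f (x t)) = (\<Sum>t\<in>S. f 0 + (f 1 - f 0) * (if x t = 1 then 1 else 0))"
    using assms(2) by (intro sum.cong) auto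
  also have "\<dots> = real (card S) * f 0 + (f 1 - f 0) * (\<Sum>t\<in>S. if x t = 1 then 1 else 0)"
    by (simp add: sum.distrib sum_distrib_left)
  also have "(\<Sum>t\<in>S. if x t = 1 then 1 else 0 :: real) = real (card {t\<in>S. x t = 1})"
    using assms(1) by (simp add: sum.inter_filter[symmetric])
  finally show ?thesis .
qed

lemma base_rate_in_unit_interval:
  assumes "\<forall>t<T. x t \<in> {0, 1}"
  shows "base_rate T x \<in> {0..1}"
proof (cases "T = 0")
  case False
  have "0 \<le> (\<Sum>t<T. x t)" using assms by (intro sum_nonneg) auto
  moreover have "(\<Sum>t<T. x t) \<le> (\<Sum>t<T. 1)" using assms by (intro sum_mono) auto
  ultimately show ?thesis using False by (simp add: base_rate_def divide_simps)
qed (simp add: base_rate_def)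

lemma exp_util_diff:
  "exp_util u b q - exp_util u a q = (u b 0 - u a 0) + q * ((u b 1 - u a 1) - (u b 0 - u a 0))"
  by (simp add: exp_util_def algebra_simps)

lemma level_set_regret_le:
  fixes x :: "'b \<Rightarrow> real" and u :: "'a \<Rightarrow> real \<Rightarrow> real"
  assumes "finite S" and "\<forall>t\<in>S. x t \<in> {0, 1}"
    and "\<forall>y\<in>{0, 1}. \<bar>u a y\<bar> \<le> 1" and "\<forall>y\<in>{0, 1}. \<bar>u b y\<bar> \<le> 1"
    and "exp_util u b q \<le> exp_util u a q"
  shows "(\<Sum>t\<in>S. u b (x t) - u a (x t))
           \<le> 4 * \<bar>q * real (card S) - real (card {t\<in>S. x t = 1})\<bar>"
proof -
  define n where "n = real (card S)"
  define m where "m = real (card {t\<in>S. x t = 1})"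
  define f where "f y = u b y - u a y" for y
  have "(\<Sum>t\<in>S. u b (x t) - u a (x t)) = n * f 0 + (f 1 - f 0) * m"
    using sum_binary_outcomes[OF assms(1,2), of f] by (simp add: f_def n_def m_def)
  also have "\<dots> = n * (exp_util u b q - exp_util u a q) + (m - q * n) * (f 1 - f 0)"
    by (simp add: exp_util_diff f_def algebra_simps)
  also have "\<dots> \<le> \<bar>m - q * n\<bar> * 4"
  proof -
    have "n * (exp_util u b q - exp_util u a q) \<le> 0"
      using assms(5) by (intro mult_nonneg_nonpos) (simp_all add: n_def)
    moreover have "\<bar>u a 0\<bar> \<le> 1" "\<bar>u a 1\<bar> \<le> 1" "\<bar>u b 0\<bar> \<le> 1" "\<bar>u b 1\<bar> \<le> 1"
      using assms(3,4) by simp_all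
    then have "\<bar>f 1 - f 0\<bar> \<le> 4"
      unfolding f_def by (simp add: abs_le_iff)
    then have "(m - q * n) * (f 1 - f 0) \<le> \<bar>m - q * n\<bar> * 4"
      using abs_ge_self[of "(m - q * n) * (f 1 - f 0)"]
        mult_left_mono[of "\<bar>f 1 - f 0\<bar>" 4 "\<bar>m - q * n\<bar>"]
      by (simp add: abs_mult)
    ultimately show ?thesis by linarith
  qed
  finally show ?thesis by (simp add: n_def m_def abs_minus_commute)
qed

lemma agent_reg_by_level_sets:
  "agent_reg u resp T p x =
     (\<Sum>q\<in>p ` {..<T}. \<Sum>t\<in>{t. t < T \<and> p t = q}.
        u (resp (base_rate T x)) (x t) - u (resp q) (x t))"
proof -
  have "agent_reg u resp T p x = (\<Sum>t<T. u (resp (base_rate T x)) (x t) - u (resp (p t)) (x t))"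
    by (simp add: agent_reg_def sum_subtractf)
  also have "\<dots> = (\<Sum>q\<in>p ` {..<T}. \<Sum>t\<in>{t\<in>{..<T}. p t = q}.
                     u (resp (base_rate T x)) (x t) - u (resp (p t)) (x t))"
    by (rule sum.image_gen) simp
  also have "\<dots> = (\<Sum>q\<in>p ` {..<T}. \<Sum>t\<in>{t. t < T \<and> p t = q}.
                     u (resp (base_rate T x)) (x t) - u (resp q) (x t))"
    by (intro sum.cong) auto
  finally show ?thesis .
qed

theorem theorem3p3:
  fixes T :: nat and x p :: "nat \<Rightarrow> real"
    and A :: "'a set" and u :: "'a \<Rightarrow> real \<Rightarrow> real" and resp :: "real \<Rightarrow> 'a"
  assumes "\<forall>t<T. x t \<in> {0, 1}"
    and "\<forall>t<T. p t \<in> {0..1}"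
    and "finite A" and "A \<noteq> {}"
    and "\<forall>a\<in>A. \<forall>y\<in>{0, 1}. \<bar>u a y\<bar> \<le> 1"
    and "best_response A u resp"
  shows "agent_reg u resp T p x \<le> 4 * cal_err T p x"
proof -
  define b where "b = resp (base_rate T x)"
  have "b \<in> A"
    using assms(6) base_rate_in_unit_interval[OF assms(1)] by (simp add: best_response_def b_def)
  have "(\<Sum>t\<in>{t. t < T \<and> p t = q}. u b (x t) - u (resp q) (x t))
      \<le> 4 * \<bar>q * real (card {t. t < T \<and> p t = q})
               - real (card {t. t < T \<and> p t = q \<and> x t = 1})\<bar>"
    if "q \<in> p ` {..<T}" for q
  proof -
    have "q \<in> {0..1}" using that assms(2) by auto
    then have "resp q \<in> A" and "exp_util u b q \<le> exp_util u (resp q) q"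
      using assms(6) \<open>b \<in> A\<close> by (auto simp: best_response_def)
    then show ?thesis
      using level_set_regret_le[where S = "{t. t < T \<and> p t = q}" and a = "resp q"]
        assms(1,5) \<open>b \<in> A\<close> by simp
  qed
  then show ?thesis
    unfolding agent_reg_by_level_sets cal_err_def sum_distrib_left b_def[symmetric]
    by (rule sum_mono)
qed

end
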